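(* Let $G$ be a Polish group with a comeagre conjugacy class $C$, and suppose that some element of $C$ is conjugate with all of its non-zero powers. Then for every integer $n\neq 0$, the map $\pi:C\to C$, $\pi(g)=g^n$, is a surjective, continuous and open $G$-map (where $G$ acts on $C$ by conjugation and $C$ has the subspace topology). In particular, $\pi$ is categorical.
   Context: It is known (Marker–Sami / Becker–Kechris) that a comeagre conjugacy class $C$ of a Polish group is $G_\delta$, hence Polish in the subspace topology, and $G$ acts continuously and transitively on it by conjugation. A Borel map $\pi:X\to Y$ between Polish spaces is called categorical if: (1) images of nonmeagre analytic sets are nonmeagre; (2) images of comeagre analytic sets are comeagre; (3) preimages of meagre analytic sets are meagre; (4) preimages of nonmeagre analytic sets are nonmeagre; (5) preimages of comeagre analytic sets are comeagre. *)

theory Defs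
  imports "HOL-Analysis.Analysis" "HOL-Algebra.Group"
begin

definition Polish_space :: "'a topology \<Rightarrow> bool" where
  "Polish_space X \<longleftrightarrow> completely_metrizable_space X \<and> separable_space X"

definition polish_group :: "('a, 'b) monoid_scheme \<Rightarrow> 'a topology \<Rightarrow> bool" where
  "polish_group G T \<longleftrightarrow> group G \<and> topspace T = carrier G
     \<and> continuous_map (prod_topology T T) T (\<lambda>(x, y). x \<otimes>\<^bsub>G\<^esub> y)
     \<and> continuous_map T T (\<lambda>x. inv\<^bsub>G\<^esub> x)
     \<and> Polish_space T"

definition conj_class :: "('a, 'b) monoid_scheme \<Rightarrow> 'a \<Rightarrow> 'a set" where
  "conj_class G g = {h \<otimes>\<^bsub>G\<^esub> g \<otimes>\<^bsub>G\<^esub> inv\<^bsub>G\<^esub> h | h. h \<in> carrier G}"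

definition nowhere_dense :: "'a topology \<Rightarrow> 'a set \<Rightarrow> bool" where
  "nowhere_dense X S \<longleftrightarrow> S \<subseteq> topspace X \<and> X interior_of (X closure_of S) = {}"

definition meagre :: "'a topology \<Rightarrow> 'a set \<Rightarrow> bool" where
  "meagre X S \<longleftrightarrow> S \<subseteq> topspace X \<and>
     (\<exists>F :: nat \<Rightarrow> 'a set. (\<forall>n. nowhere_dense X (F n)) \<and> S \<subseteq> (\<Union>n. F n))"

definition comeagre :: "'a topology \<Rightarrow> 'a set \<Rightarrow> bool" where
  "comeagre X S \<longleftrightarrow> S \<subseteq> topspace X \<and> meagre X (topspace X - S)"

definition borel_sets :: "'a topology \<Rightarrow> 'a set set" where
  "borel_sets X = sigma_sets (topspace X) {U. openin X U}"

definition borel_map :: "'a topology \<Rightarrow> 'b topology \<Rightarrow> ('a \<Rightarrow> 'b) \<Rightarrow> bool" where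
  "borel_map X Y f \<longleftrightarrow> f ` topspace X \<subseteq> topspace Y \<and>
     (\<forall>B \<in> borel_sets Y. {x \<in> topspace X. f x \<in> B} \<in> borel_sets X)"

definition baire_space :: "(nat \<Rightarrow> nat) topology" where
  "baire_space = product_topology (\<lambda>_. discrete_topology UNIV) UNIV"

definition analytic :: "'a topology \<Rightarrow> 'a set \<Rightarrow> bool" where
  "analytic X A \<longleftrightarrow> A \<subseteq> topspace X \<and>
     (A = {} \<or> (\<exists>f. continuous_map baire_space X f \<and> f ` topspace baire_space = A))"

definition categorical :: "'a topology \<Rightarrow> 'b topology \<Rightarrow> ('a \<Rightarrow> 'b) \<Rightarrow> bool" where
  "categorical X Y f \<longleftrightarrow> borel_map X Y f \<and>
     (\<forall>A. analytic X A \<and> \<not> meagre X A \<longrightarrow> \<not> meagre Y (f ` A)) \<and>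
     (\<forall>A. analytic X A \<and> comeagre X A \<longrightarrow> comeagre Y (f ` A)) \<and>
     (\<forall>B. analytic Y B \<and> meagre Y B \<longrightarrow> meagre X {x \<in> topspace X. f x \<in> B}) \<and>
     (\<forall>B. analytic Y B \<and> \<not> meagre Y B \<longrightarrow> \<not> meagre X {x \<in> topspace X. f x \<in> B}) \<and>
     (\<forall>B. analytic Y B \<and> comeagre Y B \<longrightarrow> comeagre X {x \<in> topspace X. f x \<in> B})"

end

theory Submission
  imports Defs
begin

text \<open>Since \<open>C\<close> is the conjugacy class of some \<open>c\<close> with \<open>c^n \<in> C\<close>, and \<open>g \<mapsto> g^n\<close>
  commutes with conjugation, the power map sends \<open>C\<close> onto \<open>C\<close>; it is continuous as a
  polynomial in the group operations. Openness comes from an Effros-type argument: for every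
  neighbourhood \<open>V\<close> of \<open>\<one>\<close> the set of conjugates of \<open>c\<close> by elements of \<open>V\<close> is nonmeagre
  (countably many translates of \<open>V\<close> cover \<open>G\<close>) and has the Baire property (it is a continuous
  image of an open subset of a Polish space), hence contains a neighbourhood of \<open>c\<close> in \<open>C\<close>;
  every equivariant self-map of \<open>C\<close> is therefore open. Finally, \<open>C\<close> is a Baire space,
  analytic subsets of \<open>C\<close> have the Baire property, and a continuous open surjection between
  such spaces preserves meagreness, nonmeagreness and comeagreness in both directions.\<close>

section \<open>Meagre sets and Baire spaces\<close>

lemma nowhere_dense_empty [simp]: "nowhere_dense X {}"
  by (simp add: nowhere_dense_def)

lemma nowhere_dense_closedin:
  assumes "closedin X F" "X interior_of F = {}" shows "nowhere_dense X F"
  using assms by (simp add: nowhere_dense_def closedin_subset closure_of_closedin)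

lemma nowhere_dense_closedin_Diff_interior:
  assumes "closedin X F" shows "nowhere_dense X (F - X interior_of F)"
proof (rule nowhere_dense_closedin)
  show "closedin X (F - X interior_of F)" using assms by (simp add: closedin_diff)
  have "X interior_of (F - X interior_of F) \<subseteq> X interior_of F"
    by (simp add: interior_of_mono)
  moreover have "X interior_of (F - X interior_of F) \<subseteq> F - X interior_of F"
    by (rule interior_of_subset)
  ultimately show "X interior_of (F - X interior_of F) = {}" by blast
qed

lemma nowhere_dense_topspace_Diff_dense_openin:
  assumes "openin X U" "X closure_of U = topspace X"
  shows "nowhere_dense X (topspace X - U)"
  using assms by (intro nowhere_dense_closedin) (auto simp: interior_of_complement)

lemma meagre_subset: "meagre X S \<Longrightarrow> T \<subseteq> S \<Longrightarrow> meagre X T"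
  unfolding meagre_def by blast

lemma meagre_empty [simp]: "meagre X {}"
  unfolding meagre_def by (intro conjI exI[of _ "\<lambda>_. {}"]) simp_all

lemma nowhere_dense_imp_meagre:
  assumes "nowhere_dense X S" shows "meagre X S"
  unfolding meagre_def
  by (intro conjI exI[of _ "\<lambda>_::nat. S"]) (use assms in \<open>auto simp: nowhere_dense_def\<close>)

lemma meagre_UN:
  assumes "\<And>n::nat. meagre X (S n)" shows "meagre X (\<Union>n. S n)"
proof -
  have "\<forall>n. \<exists>F. (\<forall>m::nat. nowhere_dense X (F m)) \<and> S n \<subseteq> (\<Union>m. F m)"
    using assms unfolding meagre_def by blast
  then obtain F where "\<forall>n. (\<forall>m::nat. nowhere_dense X (F n m)) \<and> S n \<subseteq> (\<Union>m. F n m)"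
    by (rule choice[THEN exE])
  then have F: "\<And>n m. nowhere_dense X (F n m)" "\<And>n. S n \<subseteq> (\<Union>m. F n m)" by blast+
  define H where "H k = F (fst (prod_decode k)) (snd (prod_decode k))" for k
  have cover: "S n \<subseteq> (\<Union>k. H k)" for n
  proof
    fix x assume "x \<in> S n"
    then obtain m where "x \<in> F n m" using F(2) by blast
    then have "x \<in> H (prod_encode (n, m))" by (simp add: H_def)
    then show "x \<in> (\<Union>k. H k)" by blast
  qed
  have "nowhere_dense X (H k)" for k unfolding H_def by (rule F(1))
  moreover have "(\<Union>n. S n) \<subseteq> topspace X" using assms unfolding meagre_def by blast
  moreover have "(\<Union>n. S n) \<subseteq> (\<Union>k. H k)" using cover by blast
  ultimately show ?thesis unfolding meagre_def by (intro conjI exI[of _ H] allI)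
qed

lemma meagre_Union_countable:
  assumes "countable \<S>" "\<And>S. S \<in> \<S> \<Longrightarrow> meagre X S" shows "meagre X (\<Union>\<S>)"
proof (cases "\<S> = {}")
  case False
  then have "\<Union>\<S> = (\<Union>n. from_nat_into \<S> n)" using assms(1) by (simp add: range_from_nat_into)
  moreover have "meagre X (\<Union>n. from_nat_into \<S> n)"
    by (rule meagre_UN) (simp add: False assms(2) from_nat_into)
  ultimately show ?thesis by simp
qed simp

lemma meagre_Un:
  assumes "meagre X S" "meagre X T" shows "meagre X (S \<union> T)"
proof -
  have "S \<union> T = (\<Union>n::nat. if n = 0 then S else T)" by (auto split: if_splits)
  then show ?thesis using meagre_UN[of X "\<lambda>n. if n = 0 then S else T"] assms by simp
qed

definition Baire_space :: "'a topology \<Rightarrow> bool" where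
  "Baire_space X \<longleftrightarrow> (\<forall>U. openin X U \<and> meagre X U \<longrightarrow> U = {})"

lemma completely_metrizable_imp_Baire_space:
  assumes "completely_metrizable_space X" shows "Baire_space X"
  unfolding Baire_space_def
proof (intro allI impI)
  fix U assume U: "openin X U \<and> meagre X U"
  then obtain F where F: "\<And>n::nat. nowhere_dense X (F n)" "U \<subseteq> (\<Union>n. F n)"
    unfolding meagre_def by blast
  let ?K = "range (\<lambda>n. X closure_of F n)"
  have "X interior_of \<Union>?K = {}"
    by (rule Baire_category_alt) (use assms F(1) in \<open>auto simp: nowhere_dense_def\<close>)
  moreover have "U \<subseteq> \<Union>?K"
  proof
    fix x assume "x \<in> U"
    then obtain n where "x \<in> F n" using F(2) by blast
    moreover have "F n \<subseteq> X closure_of F n"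
      using F(1)[of n] by (simp add: nowhere_dense_def closure_of_subset)
    ultimately show "x \<in> \<Union>?K" by blast
  qed
  ultimately show "U = {}" using U interior_of_maximal by blast
qed

lemma Baire_space_nonmeagre_topspace:
  assumes "Baire_space X" "topspace X \<noteq> {}" shows "\<not> meagre X (topspace X)"
  using assms by (auto simp: Baire_space_def)

lemma nowhere_dense_in_dense_subtopology:
  assumes dense: "X closure_of C = topspace X" and S: "nowhere_dense (subtopology X C) S"
  shows "nowhere_dense X S"
proof -
  have SC: "S \<subseteq> C \<inter> topspace X" using S by (simp add: nowhere_dense_def)
  let ?O = "X interior_of (X closure_of S)"
  have "C \<inter> S = S" using SC by blast
  then have "?O \<inter> C \<subseteq> subtopology X C closure_of S"
    using interior_of_subset[of X "X closure_of S"] by (auto simp: closure_of_subtopology)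
  then have "?O \<inter> C \<subseteq> subtopology X C interior_of (subtopology X C closure_of S)"
    by (simp add: interior_of_maximal openin_subtopology_Int)
  then have "?O \<inter> C = {}" using S by (simp add: nowhere_dense_def)
  then have "?O \<inter> X closure_of C = {}"
    using openin_Int_closure_of_eq_empty[of X ?O C] by simp
  then have "?O = {}" using dense interior_of_subset_topspace[of X] by blast
  then show ?thesis using SC by (simp add: nowhere_dense_def)
qed

lemma meagre_in_dense_subtopology:
  assumes dense: "X closure_of C = topspace X" and S: "meagre (subtopology X C) S"
  shows "meagre X S"
proof -
  obtain F where F: "\<And>n::nat. nowhere_dense (subtopology X C) (F n)" "S \<subseteq> (\<Union>n. F n)"
    using S unfolding meagre_def by blast
  have "S \<subseteq> topspace X" using S unfolding meagre_def by auto
  then show ?thesis unfolding meagre_def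
    by (intro conjI exI[of _ F] allI nowhere_dense_in_dense_subtopology[OF dense] F)
qed

lemma Baire_space_comeagre_subtopology:
  assumes X: "Baire_space X" and C: "comeagre X C" shows "Baire_space (subtopology X C)"
proof -
  have Ct: "C \<subseteq> topspace X" and mC: "meagre X (topspace X - C)"
    using C by (simp_all add: comeagre_def)
  have "topspace X - X closure_of C \<subseteq> topspace X - C" using closure_of_subset[OF Ct] by blast
  then have "meagre X (topspace X - X closure_of C)" using mC meagre_subset by blast
  moreover have "openin X (topspace X - X closure_of C)"
    by (simp add: openin_diff closedin_closure_of)
  ultimately have "topspace X - X closure_of C = {}" using X unfolding Baire_space_def by blast
  then have dense: "X closure_of C = topspace X" using closure_of_subset_topspace[of X C] by blast
  show ?thesis
    unfolding Baire_space_def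
  proof (intro allI impI)
    fix U assume U: "openin (subtopology X C) U \<and> meagre (subtopology X C) U"
    then obtain V where V: "openin X V" "U = V \<inter> C" by (auto simp: openin_subtopology)
    have "V \<subseteq> U \<union> (topspace X - C)" using V openin_subset by blast
    then have "meagre X V"
      using meagre_Un[OF meagre_in_dense_subtopology[OF dense] mC] U meagre_subset by blast
    then show "U = {}" using X V unfolding Baire_space_def by blast
  qed
qed

section \<open>The Baire property\<close>

definition Baire_property :: "'a topology \<Rightarrow> 'a set \<Rightarrow> bool" where
  "Baire_property X A \<longleftrightarrow> A \<subseteq> topspace X \<and> (\<exists>U. openin X U \<and> meagre X ((A - U) \<union> (U - A)))"

lemma Baire_property_meagre: "meagre X A \<Longrightarrow> Baire_property X A"
  unfolding Baire_property_def by (auto intro!: exI[of _ "{}"] simp: meagre_def)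

lemma Baire_property_UN:
  assumes "\<And>n::nat. Baire_property X (A n)" shows "Baire_property X (\<Union>n. A n)"
proof -
  obtain U where U: "\<And>n. openin X (U n)" "\<And>n. meagre X ((A n - U n) \<union> (U n - A n))"
    using assms unfolding Baire_property_def by metis
  have "((\<Union>n. A n) - (\<Union>n. U n)) \<union> ((\<Union>n. U n) - (\<Union>n. A n))
          \<subseteq> (\<Union>n. (A n - U n) \<union> (U n - A n))"
    by blast
  then have "meagre X (((\<Union>n. A n) - (\<Union>n. U n)) \<union> ((\<Union>n. U n) - (\<Union>n. A n)))"
    using meagre_UN[of X "\<lambda>n. (A n - U n) \<union> (U n - A n)"] U(2) meagre_subset by blast
  moreover have "openin X (\<Union>n. U n)" using U(1) by blast
  moreover have "(\<Union>n. A n) \<subseteq> topspace X" using assms unfolding Baire_property_def by blast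
  ultimately show ?thesis unfolding Baire_property_def by blast
qed

lemma Baire_property_topspace_Diff:
  assumes "Baire_property X A" shows "Baire_property X (topspace X - A)"
proof -
  obtain U where U: "openin X U" "meagre X ((A - U) \<union> (U - A))"
    using assms unfolding Baire_property_def by blast
  let ?F = "topspace X - U"
  let ?V = "X interior_of ?F"
  have F: "closedin X ?F" using U(1) by blast
  have "((topspace X - A) - ?V) \<union> (?V - (topspace X - A)) \<subseteq> ((A - U) \<union> (U - A)) \<union> (?F - ?V)"
    using interior_of_subset[of X ?F] by blast
  moreover have "meagre X (((A - U) \<union> (U - A)) \<union> (?F - ?V))"
    by (rule meagre_Un[OF U(2) nowhere_dense_imp_meagre[OF nowhere_dense_closedin_Diff_interior[OF F]]])
  ultimately show ?thesis unfolding Baire_property_def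
    by (meson Diff_subset meagre_subset openin_interior_of)
qed

lemma Baire_property_Diff:
  assumes "Baire_property X A" "Baire_property X B" shows "Baire_property X (A - B)"
proof -
  have "A - B = topspace X - ((topspace X - A) \<union> B)"
    using assms unfolding Baire_property_def by blast
  moreover have "(topspace X - A) \<union> B = (\<Union>n::nat. if n = 0 then topspace X - A else B)"
    by (auto split: if_splits)
  ultimately show ?thesis
    using assms Baire_property_UN[of X "\<lambda>n. if n = 0 then topspace X - A else B"]
    by (simp add: Baire_property_topspace_Diff)
qed

lemma Baire_property_nonmeagreE:
  assumes "Baire_property X A" "\<not> meagre X A"
  obtains U where "openin X U" "U \<noteq> {}" "meagre X (U - A)"
proof -
  obtain U where U: "openin X U" "meagre X ((A - U) \<union> (U - A))"
    using assms(1) unfolding Baire_property_def by blast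
  have "U \<noteq> {}" using U assms(2) by auto
  then show ?thesis using U that meagre_subset[of X "(A - U) \<union> (U - A)" "U - A"] by blast
qed

definition nonmeagre_points :: "'a topology \<Rightarrow> 'a set \<Rightarrow> 'a set" where
  "nonmeagre_points X S = {x \<in> topspace X. \<forall>V. openin X V \<and> x \<in> V \<longrightarrow> \<not> meagre X (S \<inter> V)}"

lemma closedin_nonmeagre_points: "closedin X (nonmeagre_points X S)"
proof -
  have "openin X (topspace X - nonmeagre_points X S)"
  proof (subst openin_subopen, intro ballI)
    fix x assume "x \<in> topspace X - nonmeagre_points X S"
    then obtain V where V: "openin X V" "x \<in> V" "meagre X (S \<inter> V)"
      unfolding nonmeagre_points_def by blast
    then have "V \<subseteq> topspace X - nonmeagre_points X S"
      unfolding nonmeagre_points_def using openin_subset by fastforce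
    then show "\<exists>T. openin X T \<and> x \<in> T \<and> T \<subseteq> topspace X - nonmeagre_points X S" using V by blast
  qed
  then show ?thesis unfolding closedin_def nonmeagre_points_def by auto
qed

lemma nonmeagre_points_subset_closure: "nonmeagre_points X S \<subseteq> X closure_of S"
proof
  fix x assume x: "x \<in> nonmeagre_points X S"
  show "x \<in> X closure_of S" unfolding in_closure_of
  proof (intro conjI allI impI)
    show "x \<in> topspace X" using x unfolding nonmeagre_points_def by blast
    fix V assume "x \<in> V \<and> openin X V"
    then have "\<not> meagre X (S \<inter> V)" using x unfolding nonmeagre_points_def by blast
    then have "S \<inter> V \<noteq> {}" by (metis meagre_empty)
    then show "\<exists>y. y \<in> S \<and> y \<in> V" by blast
  qed
qed

lemma meagre_Diff_nonmeagre_points: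
  assumes "second_countable X" "S \<subseteq> topspace X" shows "meagre X (S - nonmeagre_points X S)"
proof -
  obtain \<B> where B: "countable \<B>" "\<forall>V\<in>\<B>. openin X V"
    "\<forall>U x. openin X U \<and> x \<in> U \<longrightarrow> (\<exists>V\<in>\<B>. x \<in> V \<and> V \<subseteq> U)"
    using assms(1) unfolding second_countable_def by blast
  let ?S = "(\<lambda>V. S \<inter> V) ` {V \<in> \<B>. meagre X (S \<inter> V)}"
  have "meagre X (\<Union>?S)" by (rule meagre_Union_countable) (use B(1) in auto)
  moreover have "S - nonmeagre_points X S \<subseteq> \<Union>?S"
  proof
    fix x assume x: "x \<in> S - nonmeagre_points X S"
    then obtain V where V: "openin X V" "x \<in> V" "meagre X (S \<inter> V)"
      using assms(2) unfolding nonmeagre_points_def by blast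
    then obtain W where W: "W \<in> \<B>" "x \<in> W" "W \<subseteq> V" using B(3) by blast
    then have "meagre X (S \<inter> W)" using V(3) meagre_subset[of X "S \<inter> V" "S \<inter> W"] by blast
    then show "x \<in> \<Union>?S" using W x by blast
  qed
  ultimately show ?thesis using meagre_subset by blast
qed

definition Baire_hull :: "'a topology \<Rightarrow> 'a set \<Rightarrow> 'a set" where
  "Baire_hull X S = nonmeagre_points X S \<union> S"

lemma Baire_property_Baire_hull:
  assumes "second_countable X" "S \<subseteq> topspace X" shows "Baire_property X (Baire_hull X S)"
proof -
  let ?N = "nonmeagre_points X S"
  let ?U = "X interior_of ?N"
  have "meagre X ((?N - ?U) \<union> (S - ?N))"
    by (intro meagre_Un nowhere_dense_imp_meagre nowhere_dense_closedin_Diff_interior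
        closedin_nonmeagre_points meagre_Diff_nonmeagre_points assms)
  moreover have "(Baire_hull X S - ?U) \<union> (?U - Baire_hull X S) \<subseteq> (?N - ?U) \<union> (S - ?N)"
    unfolding Baire_hull_def using interior_of_subset[of X ?N] by blast
  ultimately have "meagre X ((Baire_hull X S - ?U) \<union> (?U - Baire_hull X S))"
    by (rule meagre_subset)
  moreover have "Baire_hull X S \<subseteq> topspace X"
    using assms(2) closedin_subset[OF closedin_nonmeagre_points[of X S]]
    unfolding Baire_hull_def by blast
  ultimately show ?thesis
    unfolding Baire_property_def using openin_interior_of by blast
qed

lemma meagre_if_Baire_property_subset_Baire_hull_Diff:
  assumes "Z \<subseteq> Baire_hull X S - S" "Baire_property X Z" shows "meagre X Z"
proof -
  obtain V where V: "openin X V" "meagre X ((Z - V) \<union> (V - Z))"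
    using assms(2) unfolding Baire_property_def by blast
  have "Z \<inter> V = {}"
  proof (rule ccontr)
    assume "Z \<inter> V \<noteq> {}"
    then obtain x where "x \<in> Z" "x \<in> V" by blast
    then have "\<not> meagre X (S \<inter> V)"
      using assms(1) V(1) unfolding Baire_hull_def nonmeagre_points_def by blast
    moreover have "S \<inter> V \<subseteq> V - Z" using assms(1) by blast
    ultimately show False using V(2) meagre_subset[of X "(Z - V) \<union> (V - Z)" "S \<inter> V"] by blast
  qed
  then show ?thesis using V(2) meagre_subset[of X "(Z - V) \<union> (V - Z)" Z] by blast
qed

lemma Baire_hull_subset_closure:
  "S \<subseteq> topspace X \<Longrightarrow> Baire_hull X S \<subseteq> X closure_of S"
  unfolding Baire_hull_def using nonmeagre_points_subset_closure[of X S] closure_of_subset[of S X]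
  by blast

text \<open>With \<open>H s\<close> the Baire hull of \<open>A s\<close>, a point of \<open>H [] - A []\<close> lies in some
  \<open>H s - (\<Union>k. H (k # s))\<close>: otherwise it determines a branch along which it stays in every
  closure, which forces it into \<open>A []\<close>.\<close>

lemma Baire_property_Souslin_scheme:
  fixes A :: "nat list \<Rightarrow> 'a set"
  assumes X: "second_countable X"
    and sub: "\<And>s. A s \<subseteq> topspace X"
    and cover: "\<And>s. A s = (\<Union>k. A (k # s))"
    and branch: "\<And>l x. l 0 = [] \<Longrightarrow> (\<And>n. \<exists>k. l (Suc n) = k # l n)
                   \<Longrightarrow> (\<And>n. x \<in> X closure_of A (l n)) \<Longrightarrow> x \<in> A []"
  shows "Baire_property X (A [])"
proof -
  define H where "H s = Baire_hull X (A s)" for s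
  define Z where "Z s = H s - (\<Union>k. H (k # s))" for s
  have H: "Baire_property X (H s)" for s
    unfolding H_def by (rule Baire_property_Baire_hull[OF X sub])
  have "Z s \<subseteq> Baire_hull X (A s) - A s" for s
  proof -
    have "A s = (\<Union>k. A (k # s))" by (rule cover)
    also have "\<dots> \<subseteq> (\<Union>k. H (k # s))" unfolding H_def Baire_hull_def by blast
    finally show ?thesis unfolding Z_def H_def by blast
  qed
  moreover have "Baire_property X (Z s)" for s
    unfolding Z_def by (rule Baire_property_Diff[OF H Baire_property_UN[OF H]])
  ultimately have "meagre X (Z s)" for s
    by (rule meagre_if_Baire_property_subset_Baire_hull_Diff)
  then have Z: "meagre X (\<Union>(range Z))" by (intro meagre_Union_countable) auto
  have "H [] - A [] \<subseteq> \<Union>(range Z)"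
  proof
    fix x assume x: "x \<in> H [] - A []"
    show "x \<in> \<Union>(range Z)"
    proof (rule ccontr)
      assume nz: "x \<notin> \<Union>(range Z)"
      define l where "l = rec_nat [] (\<lambda>n s. (SOME k. x \<in> H (k # s)) # s)"
      have l0: "l 0 = []" and lS: "l (Suc n) = (SOME k. x \<in> H (k # l n)) # l n" for n
        by (simp_all add: l_def)
      have xH: "x \<in> H (l n)" for n
      proof (induction n)
        case 0 then show ?case using x l0 by simp
      next
        case (Suc n)
        then have "\<exists>k. x \<in> H (k # l n)" using nz unfolding Z_def by blast
        then show ?case unfolding lS by (rule someI_ex)
      qed
      have "x \<in> X closure_of A (l n)" for n
        using xH[of n] Baire_hull_subset_closure[OF sub[of "l n"]] unfolding H_def by blast
      then have "x \<in> A []" using branch[of l x] l0 lS by blast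
      then show False using x by blast
    qed
  qed
  then have "meagre X (H [] - A [])" using Z meagre_subset by blast
  moreover have "A [] = H [] - (H [] - A [])" unfolding H_def Baire_hull_def by blast
  ultimately show ?thesis using Baire_property_Diff[OF H[of "[]"] Baire_property_meagre] by metis
qed

lemma Baire_property_continuous_image_scheme:
  fixes Q :: "nat list \<Rightarrow> 'a set"
  assumes Y: "Hausdorff_space Y" "second_countable Y" and f: "continuous_map X Y f"
    and sub: "\<And>s. Q s \<subseteq> topspace X"
    and cover: "\<And>s. Q s = (\<Union>k. Q (k # s))"
    and shrink: "\<And>l. l 0 = [] \<Longrightarrow> (\<And>n. \<exists>k. l (Suc n) = k # l n) \<Longrightarrow> (\<And>n. Q (l n) \<noteq> {})
                   \<Longrightarrow> \<exists>p \<in> Q []. \<forall>V. openin X V \<and> p \<in> V \<longrightarrow> (\<exists>n. Q (l n) \<subseteq> V)"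
  shows "Baire_property Y (f ` Q [])"
proof (rule Baire_property_Souslin_scheme[OF Y(2)])
  show "f ` Q s \<subseteq> topspace Y" for s
    using sub[of s] continuous_map_image_subset_topspace[OF f] by blast
  show "f ` Q s = (\<Union>k. f ` Q (k # s))" for s
    using cover[of s] by (simp add: image_UN)
  fix l y assume l0: "l 0 = []" and lS: "\<And>n. \<exists>k. l (Suc n) = k # l n"
    and y: "\<And>n. y \<in> Y closure_of (f ` Q (l n))"
  have "Q (l n) \<noteq> {}" for n using y[of n] by auto
  then obtain p where p: "p \<in> Q []" and conv: "\<forall>V. openin X V \<and> p \<in> V \<longrightarrow> (\<exists>n. Q (l n) \<subseteq> V)"
    using shrink[OF l0 lS] by blast
  have "y = f p"
  proof (rule ccontr)
    assume "y \<noteq> f p"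
    moreover have "y \<in> topspace Y" using y[of 0] in_closure_of by fast
    moreover have "f p \<in> topspace Y"
      using p sub[of "[]"] continuous_map_image_subset_topspace[OF f] by blast
    moreover have "\<forall>a b. a \<in> topspace Y \<and> b \<in> topspace Y \<and> a \<noteq> b
              \<longrightarrow> (\<exists>U V. openin Y U \<and> openin Y V \<and> a \<in> U \<and> b \<in> V \<and> disjnt U V)"
      using Y(1) unfolding Hausdorff_space_def .
    ultimately obtain U V where UV: "openin Y U" "openin Y V" "y \<in> U" "f p \<in> V" "disjnt U V"
      by blast
    have "openin X {x \<in> topspace X. f x \<in> V}"
      using openin_continuous_map_preimage[OF f UV(2)] .
    moreover have "p \<in> {x \<in> topspace X. f x \<in> V}" using p sub[of "[]"] UV(4) by blast
    ultimately obtain n where "Q (l n) \<subseteq> {x \<in> topspace X. f x \<in> V}" using conv by blast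
    then have "f ` Q (l n) \<subseteq> V" by blast
    moreover obtain z where "z \<in> f ` Q (l n)" "z \<in> U"
      using y[of n] UV(1,3) unfolding in_closure_of by blast
    ultimately show False using UV(5) unfolding disjnt_def by blast
  qed
  then show "y \<in> f ` Q []" using p by blast
qed

context Metric_space
begin

lemma separable_imp_countable_ball_base:
  assumes "separable_space mtopology"
  obtains r :: "nat \<Rightarrow> real" and c :: "nat \<Rightarrow> 'a"
  where "\<And>k. r k > 0"
    and "\<And>U x \<epsilon>. openin mtopology U \<Longrightarrow> x \<in> U \<Longrightarrow> \<epsilon> > 0
           \<Longrightarrow> \<exists>k. r k \<le> \<epsilon> \<and> x \<in> mball (c k) (r k) \<and> mcball (c k) (r k) \<subseteq> U"
proof -
  obtain D where D: "countable D" "D \<subseteq> M" "mtopology closure_of D = M"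
    using assms unfolding separable_space_def by auto
  define c where "c k = from_nat_into D (fst (prod_decode k))" for k
  define r where "r k = inverse (real (Suc (snd (prod_decode k))))" for k
  show ?thesis
  proof (rule that)
    show "r k > 0" for k by (simp add: r_def)
    fix U x and \<epsilon> :: real assume U: "openin mtopology U" "x \<in> U" "\<epsilon> > 0"
    then obtain \<delta> where \<delta>: "\<delta> > 0" "mball x \<delta> \<subseteq> U" "x \<in> M"
      unfolding openin_mtopology by blast
    obtain m where m: "inverse (real (Suc m)) < min (\<delta>/2) \<epsilon>"
      using reals_Archimedean[of "min (\<delta>/2) \<epsilon>"] \<delta>(1) U(3) by auto
    let ?e = "inverse (real (Suc m))"
    have "x \<in> mtopology closure_of D" using D(3) \<delta>(3) by simp
    then obtain q where q: "q \<in> D" "q \<in> mball x ?e"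
      unfolding in_closure_of using \<delta>(3) by (meson centre_in_mball_iff openin_mball inverse_Suc)
    define k where "k = prod_encode (to_nat_on D q, m)"
    have ck: "c k = q" "r k = ?e" unfolding k_def c_def r_def using q(1) D(1) by auto
    have "mcball q ?e \<subseteq> U"
    proof
      fix z assume z: "z \<in> mcball q ?e"
      have "d x z \<le> d x q + d q z" using q z by (simp add: triangle)
      also have "\<dots> < \<delta>" using q z m by auto
      finally show "z \<in> U" using \<delta> z q by auto
    qed
    moreover have "x \<in> mball q ?e" using q(2) commute by auto
    ultimately show "\<exists>k. r k \<le> \<epsilon> \<and> x \<in> mball (c k) (r k) \<and> mcball (c k) (r k) \<subseteq> U"
      using ck m by (intro exI[of _ k]) auto
  qed
qed

lemma separable_imp_second_countable:
  assumes "separable_space mtopology" shows "second_countable mtopology"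
proof (rule separable_imp_countable_ball_base[OF assms])
  fix r :: "nat \<Rightarrow> real" and c :: "nat \<Rightarrow> 'a"
  assume base: "\<And>U x \<epsilon>. openin mtopology U \<Longrightarrow> x \<in> U \<Longrightarrow> \<epsilon> > 0
           \<Longrightarrow> \<exists>k. r k \<le> \<epsilon> \<and> x \<in> mball (c k) (r k) \<and> mcball (c k) (r k) \<subseteq> U"
  show ?thesis unfolding second_countable_def
  proof (intro exI[of _ "range (\<lambda>k. mball (c k) (r k))"] conjI ballI allI impI)
    fix U x assume "openin mtopology U \<and> x \<in> U"
    then obtain k where "x \<in> mball (c k) (r k)" "mcball (c k) (r k) \<subseteq> U"
      using base[of U x 1] by auto
    then show "\<exists>V \<in> range (\<lambda>k. mball (c k) (r k)). x \<in> V \<and> V \<subseteq> U"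
      using mball_subset_mcball by blast
  qed auto
qed

lemma mcomplete_nested_balls:
  assumes "mcomplete" and c: "\<And>n. c n \<in> M" and r: "\<And>n. 0 < r n" "\<And>n. r n \<le> (1/2)^n"
    and nested: "\<And>n. mcball (c (Suc n)) (r (Suc n)) \<subseteq> mball (c n) (r n)"
  obtains p where "\<And>n. p \<in> mcball (c n) (r n)"
    and "\<And>V. openin mtopology V \<Longrightarrow> p \<in> V \<Longrightarrow> \<exists>n. mball (c n) (r n) \<subseteq> V"
proof -
  define B where "B n = mcball (c n) (r n)" for n
  have "B (Suc n) \<subseteq> B n" for n
    unfolding B_def using nested[of n] mball_subset_mcball by blast
  then have "decseq B" by (simp add: decseq_Suc_iff)
  moreover have "c n \<in> B n" for n unfolding B_def using c[of n] r(1)[of n] by simp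
  then have "B n \<noteq> {}" for n by blast
  moreover have "\<exists>n a. B n \<subseteq> mcball a \<epsilon>" if \<epsilon>: "\<epsilon> > 0" for \<epsilon>
  proof -
    obtain n where "(1/2::real)^n < \<epsilon>" using real_arch_pow_inv[of \<epsilon> "1/2"] \<epsilon> by auto
    then have "B n \<subseteq> mcball (c n) \<epsilon>"
      unfolding B_def using r(2)[of n] by (intro mcball_subset_concentric) linarith
    then show ?thesis by blast
  qed
  moreover have "closedin mtopology (B n)" for n unfolding B_def by simp
  ultimately have "\<Inter>(range B) \<noteq> {}" using assms(1) unfolding mcomplete_nest by blast
  then obtain p where p: "\<And>n. p \<in> B n" by blast
  show ?thesis
  proof (rule that)
    show "p \<in> mcball (c n) (r n)" for n using p B_def by simp
    fix V assume "openin mtopology V" "p \<in> V"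
    then obtain \<epsilon> where \<epsilon>: "\<epsilon> > 0" "mball p \<epsilon> \<subseteq> V" unfolding openin_mtopology by blast
    obtain n where n: "(1/2::real)^n < \<epsilon>/2" using real_arch_pow_inv[of "\<epsilon>/2" "1/2"] \<epsilon>(1) by auto
    have "mball (c n) (r n) \<subseteq> mball p \<epsilon>"
    proof
      fix z assume z: "z \<in> mball (c n) (r n)"
      have pc: "p \<in> M" "d (c n) p \<le> r n" using p[of n] unfolding B_def by auto
      have "d p z \<le> d p (c n) + d (c n) z" using z pc by (simp add: triangle)
      also have "\<dots> < \<epsilon>" using pc z r(2)[of n] n commute by auto
      finally show "z \<in> mball p \<epsilon>" using z pc by simp
    qed
    then show "\<exists>n. mball (c n) (r n) \<subseteq> V" using \<epsilon>(2) by blast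
  qed
qed

end

text \<open>In the scheme below, \<open>Q (k # s)\<close> is the \<open>k\<close>-th basic ball if its closed ball lies in
  \<open>Q s\<close> and its radius is at most \<open>2^-length s\<close>, and empty otherwise; by completeness, branches
  of nonempty sets shrink to a point.\<close>

lemma (in Metric_space) Baire_property_continuous_image:
  assumes complete: "mcomplete" and sep: "separable_space mtopology"
    and Y: "Hausdorff_space Y" "second_countable Y" and f: "continuous_map mtopology Y f"
  shows "Baire_property Y (f ` M)"
proof (rule separable_imp_countable_ball_base[OF sep])
  fix r :: "nat \<Rightarrow> real" and c :: "nat \<Rightarrow> 'a"
  assume r: "\<And>k. r k > 0"
    and base: "\<And>U x \<epsilon>. openin mtopology U \<Longrightarrow> x \<in> U \<Longrightarrow> \<epsilon> > 0
           \<Longrightarrow> \<exists>k. r k \<le> \<epsilon> \<and> x \<in> mball (c k) (r k) \<and> mcball (c k) (r k) \<subseteq> U"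
  define child where "child U n k =
      (if mcball (c k) (r k) \<subseteq> U \<and> r k \<le> (1/2)^n then mball (c k) (r k) else {})" for U n k
  define Q where "Q = rec_list M (\<lambda>k s U. child U (length s) k)"
  have Q_Nil: "Q [] = M" and Q_Cons: "Q (k # s) = child (Q s) (length s) k" for k s
    by (simp_all add: Q_def)
  have child_sub: "child U n k \<subseteq> U" for U n k
    unfolding child_def using mball_subset_mcball[of "c k" "r k"] by auto
  have open_Q: "openin mtopology (Q s)" for s
    by (cases s) (simp_all add: Q_Nil Q_Cons child_def)
  have "Baire_property Y (f ` Q [])"
  proof (rule Baire_property_continuous_image_scheme[OF Y f])
    show "Q s \<subseteq> topspace mtopology" for s using openin_subset[OF open_Q] .
    show "Q s = (\<Union>k. Q (k # s))" for s
    proof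
      show "Q s \<subseteq> (\<Union>k. Q (k # s))"
      proof
        fix x assume "x \<in> Q s"
        then obtain k where "r k \<le> (1/2)^(length s)" "x \<in> mball (c k) (r k)" "mcball (c k) (r k) \<subseteq> Q s"
          using base[of "Q s" x "(1/2)^(length s)"] open_Q[of s] by auto
        then have "x \<in> Q (k # s)" by (simp add: Q_Cons child_def)
        then show "x \<in> (\<Union>k. Q (k # s))" by blast
      qed
      show "(\<Union>k. Q (k # s)) \<subseteq> Q s" using child_sub by (auto simp: Q_Cons)
    qed
    fix l assume l0: "l 0 = []" and lS: "\<And>n. \<exists>k. l (Suc n) = k # l n"
      and ne: "\<And>n. Q (l n) \<noteq> {}"
    have len: "length (l n) = n" for n
    proof (induction n)
      case (Suc n)
      obtain k where "l (Suc n) = k # l n" using lS by blast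
      then show ?case using Suc by simp
    qed (simp add: l0)
    have "\<exists>k. Q (l (Suc n)) = mball (c k) (r k) \<and> mcball (c k) (r k) \<subseteq> Q (l n) \<and> r k \<le> (1/2)^n"
      for n
    proof -
      obtain k where k: "l (Suc n) = k # l n" using lS by blast
      have "mcball (c k) (r k) \<subseteq> Q (l n) \<and> r k \<le> (1/2)^n"
      proof (rule ccontr)
        assume "\<not> ?thesis"
        then have "Q (l (Suc n)) = {}" unfolding k Q_Cons child_def len by auto
        then show False using ne by blast
      qed
      then show ?thesis unfolding k Q_Cons child_def len by (intro exI[of _ k]) simp
    qed
    then obtain K where K: "\<And>n. Q (l (Suc n)) = mball (c (K n)) (r (K n))"
        "\<And>n. mcball (c (K n)) (r (K n)) \<subseteq> Q (l n)" "\<And>n. r (K n) \<le> (1/2)^n"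
      by metis
    show "\<exists>p \<in> Q []. \<forall>V. openin mtopology V \<and> p \<in> V \<longrightarrow> (\<exists>n. Q (l n) \<subseteq> V)"
    proof (rule mcomplete_nested_balls[OF complete, where c = "\<lambda>n. c (K n)" and r = "\<lambda>n. r (K n)"])
      show "c (K n) \<in> M" for n using ne[of "Suc n"] K(1)[of n] mball_eq_empty by metis
      show "0 < r (K n)" "r (K n) \<le> (1/2)^n" for n using r K(3) by auto
      show "mcball (c (K (Suc n))) (r (K (Suc n))) \<subseteq> mball (c (K n)) (r (K n))" for n
        using K(1)[of n] K(2)[of "Suc n"] by simp
      fix p assume p: "\<And>n. p \<in> mcball (c (K n)) (r (K n))"
        and conv: "\<And>V. openin mtopology V \<Longrightarrow> p \<in> V \<Longrightarrow> \<exists>n. mball (c (K n)) (r (K n)) \<subseteq> V"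
      show ?thesis
      proof (intro bexI allI impI)
        show "p \<in> Q []" using p[of 0] K(2)[of 0] l0 by auto
        fix V assume "openin mtopology V \<and> p \<in> V"
        then obtain n where "mball (c (K n)) (r (K n)) \<subseteq> V" using conv by blast
        then show "\<exists>n. Q (l n) \<subseteq> V" using K(1)[of n] by (intro exI[of _ "Suc n"]) simp
      qed
    qed
  qed
  then show ?thesis by (simp add: Q_Nil)
qed

lemma Baire_property_Polish_image:
  assumes "Polish_space X" "Hausdorff_space Y" "second_countable Y" "continuous_map X Y f"
  shows "Baire_property Y (f ` topspace X)"
proof -
  obtain M d where "Metric_space M d" "Metric_space.mcomplete M d" "X = Metric_space.mtopology M d"
    using assms(1) unfolding Polish_space_def completely_metrizable_space_def by blast
  then show ?thesis
    using Metric_space.Baire_property_continuous_image Metric_space.topspace_mtopology assms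
    unfolding Polish_space_def by metis
qed

lemma Polish_space_imp_second_countable: "Polish_space X \<Longrightarrow> second_countable X"
  unfolding Polish_space_def completely_metrizable_space_def
  using Metric_space.separable_imp_second_countable by blast

lemma Polish_space_openin: "Polish_space X \<Longrightarrow> openin X U \<Longrightarrow> Polish_space (subtopology X U)"
  by (simp add: Polish_space_def completely_metrizable_space_openin separable_space_open_subset)

section \<open>The Baire space and analytic sets\<close>

lemma topspace_baire_space [simp]: "topspace baire_space = UNIV"
  by (simp add: baire_space_def)

lemma openin_baire_space_contains_cylinder:
  assumes "openin baire_space W" "x \<in> W"
  obtains n where "\<And>z. (\<forall>i<n. z i = x i) \<Longrightarrow> z \<in> W"
proof -
  have "openin (product_topology (\<lambda>_. discrete_topology (UNIV::nat set)) UNIV) W"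
    using assms(1) by (simp add: baire_space_def)
  then have "\<forall>x\<in>W. \<exists>U. finite {i \<in> UNIV. U i \<noteq> topspace (discrete_topology (UNIV::nat set))} \<and>
      (\<forall>i \<in> UNIV. openin (discrete_topology UNIV) (U i)) \<and> x \<in> Pi\<^sub>E UNIV U \<and> Pi\<^sub>E UNIV U \<subseteq> W"
    unfolding openin_product_topology_alt .
  then obtain U where U: "finite {i. U i \<noteq> UNIV}" "x \<in> Pi\<^sub>E UNIV U" "Pi\<^sub>E UNIV U \<subseteq> W"
    using assms(2) by auto
  obtain n where n: "\<And>i. U i \<noteq> UNIV \<Longrightarrow> i < n"
    using finite_nat_bounded[OF U(1)] by blast
  have "z \<in> Pi\<^sub>E UNIV U" if "\<forall>i<n. z i = x i" for z
    using that n U(2) by (auto simp: PiE_def Pi_def) (metis UNIV_I)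
  then show ?thesis using that U(3) by blast
qed

lemma Polish_space_baire_space: "Polish_space baire_space"
  unfolding Polish_space_def
proof
  show "completely_metrizable_space baire_space"
    unfolding baire_space_def
    by (simp add: completely_metrizable_space_product_topology completely_metrizable_space_discrete_topology)
  let ?D = "range (\<lambda>xs :: nat list. \<lambda>i. if i < length xs then xs ! i else 0)"
  have "x \<in> baire_space closure_of ?D" for x
    unfolding in_closure_of
  proof (intro conjI allI impI)
    fix W assume "x \<in> W \<and> openin baire_space W"
    then obtain n where n: "\<And>z. (\<forall>i<n. z i = x i) \<Longrightarrow> z \<in> W"
      using openin_baire_space_contains_cylinder by metis
    have "(\<lambda>i. if i < length (map x [0..<n]) then map x [0..<n] ! i else 0) \<in> W"
      by (rule n) simp
    then show "\<exists>y. y \<in> ?D \<and> y \<in> W" by blast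
  qed simp
  then show "separable_space baire_space"
    unfolding separable_space_def by (intro exI[of _ ?D]) auto
qed

lemma Baire_property_analytic:
  assumes "analytic Y B" "Hausdorff_space Y" "second_countable Y"
  shows "Baire_property Y B"
  using assms Baire_property_Polish_image[OF Polish_space_baire_space] Baire_property_meagre
  unfolding analytic_def by (metis meagre_empty)

section \<open>Categorical maps\<close>

lemma homeomorphic_map_nowhere_dense:
  assumes f: "homeomorphic_map X Y f" and S: "nowhere_dense X S"
  shows "nowhere_dense Y (f ` S)"
proof -
  have St: "S \<subseteq> topspace X" using S by (simp add: nowhere_dense_def)
  have "Y closure_of (f ` S) = f ` (X closure_of S)" by (rule homeomorphic_map_closure_of[OF f St])
  moreover have "Y interior_of (f ` (X closure_of S)) = f ` (X interior_of (X closure_of S))"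
    by (rule homeomorphic_map_interior_of[OF f closure_of_subset_topspace])
  moreover have "f ` S \<subseteq> topspace Y"
    using St homeomorphic_imp_surjective_map[OF f] by blast
  ultimately show ?thesis using S by (simp add: nowhere_dense_def)
qed

lemma homeomorphic_map_meagre:
  assumes f: "homeomorphic_map X Y f" and S: "meagre X S"
  shows "meagre Y (f ` S)"
proof -
  obtain F where F: "\<And>n::nat. nowhere_dense X (F n)" "S \<subseteq> (\<Union>n. F n)"
    using S unfolding meagre_def by blast
  have "f ` S \<subseteq> topspace Y"
    using S homeomorphic_imp_surjective_map[OF f] unfolding meagre_def by blast
  moreover have "f ` S \<subseteq> (\<Union>n. f ` F n)" using F(2) by blast
  ultimately show ?thesis unfolding meagre_def
    by (intro conjI exI[of _ "\<lambda>n. f ` F n"] allI homeomorphic_map_nowhere_dense[OF f F(1)])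
qed

lemma nowhere_dense_continuous_open_preimage:
  assumes f: "continuous_map X Y f" "open_map X Y f" and N: "nowhere_dense Y N"
  shows "nowhere_dense X {x \<in> topspace X. f x \<in> N}"
proof -
  let ?S = "{x \<in> topspace X. f x \<in> N}"
  let ?O = "X interior_of (X closure_of ?S)"
  have "N \<subseteq> Y closure_of N" using N closure_of_subset unfolding nowhere_dense_def by blast
  then have "?S \<subseteq> {x \<in> topspace X. f x \<in> Y closure_of N}" by blast
  moreover have "closedin X {x \<in> topspace X. f x \<in> Y closure_of N}"
    using closedin_continuous_map_preimage[OF f(1)] by simp
  ultimately have "X closure_of ?S \<subseteq> {x \<in> topspace X. f x \<in> Y closure_of N}"
    by (rule closure_of_minimal)
  then have "f ` ?O \<subseteq> Y closure_of N" using interior_of_subset[of X "X closure_of ?S"] by blast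
  moreover have "openin Y (f ` ?O)" using f(2) unfolding open_map_def by simp
  ultimately have "f ` ?O \<subseteq> Y interior_of (Y closure_of N)" by (simp add: interior_of_maximal)
  then have "?O = {}" using N unfolding nowhere_dense_def by blast
  then show ?thesis unfolding nowhere_dense_def by blast
qed

lemma meagre_continuous_open_preimage:
  assumes f: "continuous_map X Y f" "open_map X Y f" and B: "meagre Y B"
  shows "meagre X {x \<in> topspace X. f x \<in> B}"
proof -
  obtain F where F: "\<And>n::nat. nowhere_dense Y (F n)" "B \<subseteq> (\<Union>n. F n)"
    using B unfolding meagre_def by blast
  have "{x \<in> topspace X. f x \<in> B} \<subseteq> (\<Union>n. {x \<in> topspace X. f x \<in> F n})" using F(2) by blast
  then show ?thesis unfolding meagre_def
    by (intro conjI exI[of _ "\<lambda>n. {x \<in> topspace X. f x \<in> F n}"] allI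
        nowhere_dense_continuous_open_preimage[OF f F(1)]) auto
qed

lemma continuous_imp_borel_map:
  assumes f: "continuous_map X Y f" shows "borel_map X Y f"
proof -
  have img: "f ` topspace X \<subseteq> topspace Y" using continuous_map_image_subset_topspace[OF f] .
  have "{x \<in> topspace X. f x \<in> B} \<in> sigma_sets (topspace X) {U. openin X U}"
    if "B \<in> sigma_sets (topspace Y) {U. openin Y U}" for B
    using that
  proof (induction rule: sigma_sets.induct)
    case (Basic a)
    then show ?case using openin_continuous_map_preimage[OF f] by auto
  next
    case (Compl a)
    have "{x \<in> topspace X. f x \<in> topspace Y - a} = topspace X - {x \<in> topspace X. f x \<in> a}"
      using img by blast
    then show ?case using sigma_sets.Compl[OF Compl.IH] by simp
  next
    case (Union a)
    have "{x \<in> topspace X. f x \<in> (\<Union>i. a i)} = (\<Union>i. {x \<in> topspace X. f x \<in> a i})" by blast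
    then show ?case using sigma_sets.Union[OF Union.IH] by simp
  qed (simp add: sigma_sets.Empty)
  then show ?thesis unfolding borel_map_def borel_sets_def using img by blast
qed

lemma analytic_continuous_image:
  assumes A: "analytic X A" and f: "continuous_map X Y f" shows "analytic Y (f ` A)"
proof (cases "A = {}")
  case False
  then obtain g where g: "continuous_map baire_space X g" "g ` topspace baire_space = A"
    using A unfolding analytic_def by blast
  have "continuous_map baire_space Y (f \<circ> g)" using continuous_map_compose[OF g(1) f] .
  moreover have "(f \<circ> g) ` topspace baire_space = f ` A" using g(2) by auto
  moreover have "f ` A \<subseteq> topspace Y"
    using A continuous_map_image_subset_topspace[OF f] unfolding analytic_def by blast
  ultimately show ?thesis unfolding analytic_def by blast
qed (simp add: analytic_def)

text \<open>Via the Baire property, a comeagre image \<open>f ` A\<close> is squeezed between an open set, which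
  is dense because its complement pulls back into a meagre open set, and a meagre set.\<close>

lemma comeagre_continuous_open_surjective_image:
  assumes X: "Baire_space X" and f: "continuous_map X Y f" "open_map X Y f"
    and surj: "f ` topspace X = topspace Y"
    and A: "comeagre X A" "Baire_property Y (f ` A)"
  shows "comeagre Y (f ` A)"
proof -
  obtain U where U: "openin Y U" "meagre Y ((f ` A - U) \<union> (U - f ` A))"
    using A(2) unfolding Baire_property_def by blast
  let ?O = "topspace Y - Y closure_of U"
  let ?P = "{x \<in> topspace X. f x \<in> ?O}"
  have "?P \<subseteq> {x \<in> topspace X. f x \<in> f ` A - U} \<union> (topspace X - A)"
    using closure_of_subset[OF openin_subset[OF U(1)]] by blast
  moreover have "meagre X {x \<in> topspace X. f x \<in> f ` A - U}"
    by (rule meagre_continuous_open_preimage[OF f meagre_subset[OF U(2)]]) blast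
  ultimately have "meagre X ?P" using A(1) meagre_Un meagre_subset unfolding comeagre_def by blast
  moreover have "openin X ?P"
    by (rule openin_continuous_map_preimage[OF f(1)]) (simp add: openin_diff closedin_closure_of)
  ultimately have "?P = {}" using X unfolding Baire_space_def by blast
  moreover have "?O \<subseteq> f ` ?P"
  proof
    fix y assume y: "y \<in> ?O"
    then obtain x where "x \<in> topspace X" "y = f x" using surj by (metis DiffD1 imageE)
    then show "y \<in> f ` ?P" using y by blast
  qed
  ultimately have "?O = {}" by blast
  then have "Y closure_of U = topspace Y" using closure_of_subset_topspace[of Y U] by blast
  then have "meagre Y (topspace Y - U)"
    by (rule nowhere_dense_imp_meagre[OF nowhere_dense_topspace_Diff_dense_openin[OF U(1)]])
  moreover have "topspace Y - f ` A \<subseteq> (U - f ` A) \<union> (topspace Y - U)" by blast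
  ultimately have "meagre Y (topspace Y - f ` A)"
    using meagre_Un[OF meagre_subset[OF U(2)]] meagre_subset by blast
  then show ?thesis
    using A(1) surj unfolding comeagre_def by blast
qed

lemma categorical_continuous_open_surjective:
  assumes X: "Baire_space X"
    and Y: "\<And>B. analytic Y B \<Longrightarrow> Baire_property Y B"
    and f: "continuous_map X Y f" "open_map X Y f" and surj: "f ` topspace X = topspace Y"
  shows "categorical X Y f"
  unfolding categorical_def
proof (intro conjI allI impI)
  show "borel_map X Y f" by (rule continuous_imp_borel_map[OF f(1)])
next
  fix A assume A: "analytic X A \<and> \<not> meagre X A"
  then have "A \<subseteq> {x \<in> topspace X. f x \<in> f ` A}" unfolding analytic_def by blast
  then show "\<not> meagre Y (f ` A)"
    using A meagre_continuous_open_preimage[OF f, of "f ` A"] meagre_subset by blast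
next
  fix A assume "analytic X A \<and> comeagre X A"
  then show "comeagre Y (f ` A)"
    using comeagre_continuous_open_surjective_image[OF X f surj] Y analytic_continuous_image[OF _ f(1)]
    by blast
next
  fix B assume "analytic Y B \<and> meagre Y B"
  then show "meagre X {x \<in> topspace X. f x \<in> B}" using meagre_continuous_open_preimage[OF f] by blast
next
  fix B assume B: "analytic Y B \<and> \<not> meagre Y B"
  then obtain U where U: "openin Y U" "U \<noteq> {}" "meagre Y (U - B)"
    using Baire_property_nonmeagreE Y by metis
  have "{x \<in> topspace X. f x \<in> U} \<subseteq> {x \<in> topspace X. f x \<in> B} \<union> {x \<in> topspace X. f x \<in> U - B}"
    by blast
  moreover have "meagre X {x \<in> topspace X. f x \<in> U - B}"
    by (rule meagre_continuous_open_preimage[OF f U(3)])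
  moreover have "\<not> meagre X {x \<in> topspace X. f x \<in> U}"
  proof -
    obtain u where "u \<in> U" using U(2) by blast
    moreover have "U \<subseteq> f ` topspace X" using openin_subset[OF U(1)] surj by simp
    ultimately have "{x \<in> topspace X. f x \<in> U} \<noteq> {}" by blast
    then show ?thesis
      using X openin_continuous_map_preimage[OF f(1) U(1)] unfolding Baire_space_def by blast
  qed
  ultimately show "\<not> meagre X {x \<in> topspace X. f x \<in> B}" using meagre_Un meagre_subset by blast
next
  fix B assume "analytic Y B \<and> comeagre Y B"
  then have "meagre X {x \<in> topspace X. f x \<in> topspace Y - B}"
    using meagre_continuous_open_preimage[OF f] unfolding comeagre_def by blast
  moreover have "topspace X - {x \<in> topspace X. f x \<in> B} = {x \<in> topspace X. f x \<in> topspace Y - B}"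
    using continuous_map_image_subset_topspace[OF f(1)] by blast
  ultimately show "comeagre X {x \<in> topspace X. f x \<in> B}" unfolding comeagre_def by auto
qed

section \<open>Polish groups and conjugation\<close>

locale Polish_group =
  fixes G (structure) and T :: "'a topology"
  assumes polish_group: "polish_group G T"
begin

sublocale group G
  using polish_group by (simp add: polish_group_def)

lemma topspace_eq_carrier: "topspace T = carrier G"
  using polish_group by (simp add: polish_group_def)

lemma Polish_space: "Polish_space T"
  using polish_group by (simp add: polish_group_def)

lemma continuous_map_mult:
  assumes "continuous_map X T f" "continuous_map X T g"
  shows "continuous_map X T (\<lambda>x. f x \<otimes> g x)"
proof -
  have "continuous_map (prod_topology T T) T (\<lambda>(x, y). x \<otimes> y)"
    using polish_group by (simp add: polish_group_def)
  then have "continuous_map X T ((\<lambda>(x, y). x \<otimes> y) \<circ> (\<lambda>x. (f x, g x)))"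
    by (rule continuous_map_compose[OF continuous_map_pairedI[OF assms]])
  then show ?thesis by (simp add: o_def)
qed

lemma continuous_map_inv:
  assumes "continuous_map X T f" shows "continuous_map X T (\<lambda>x. inv (f x))"
proof -
  have "continuous_map T T (\<lambda>x. inv x)" using polish_group by (simp add: polish_group_def)
  then have "continuous_map X T ((\<lambda>x. inv x) \<circ> f)" by (rule continuous_map_compose[OF assms])
  then show ?thesis by (simp add: o_def)
qed

lemma continuous_map_nat_pow: "continuous_map T T (\<lambda>x. x [^] (n::nat))"
proof (induction n)
  case (Suc n)
  then show ?case using continuous_map_mult[OF Suc continuous_map_id] by (simp add: id_def)
qed (simp add: topspace_eq_carrier)

lemma continuous_map_int_pow: "continuous_map T T (\<lambda>x. x [^] (n::int))"
proof (cases "n < 0")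
  case True
  then have "x [^] n = inv (x [^] (nat (-n)))" for x
    using int_pow_def2[where a = x and z = n and G = G] by simp
  then show ?thesis using continuous_map_inv[OF continuous_map_nat_pow] by presburger
next
  case False
  then have "x [^] n = x [^] (nat n)" for x
    using int_pow_def2[where a = x and z = n and G = G] by simp
  then show ?thesis using continuous_map_nat_pow by presburger
qed

definition conjugate :: "'a \<Rightarrow> 'a \<Rightarrow> 'a" where
  "conjugate h x = h \<otimes> x \<otimes> inv h"

lemma conjugate_closed [simp]: "h \<in> carrier G \<Longrightarrow> x \<in> carrier G \<Longrightarrow> conjugate h x \<in> carrier G"
  by (simp add: conjugate_def)

lemma conjugate_conjugate:
  "k \<in> carrier G \<Longrightarrow> h \<in> carrier G \<Longrightarrow> x \<in> carrier G
    \<Longrightarrow> conjugate k (conjugate h x) = conjugate (k \<otimes> h) x"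
  by (simp add: conjugate_def m_assoc inv_mult_group)

lemma conjugate_inv_conjugate:
  "h \<in> carrier G \<Longrightarrow> x \<in> carrier G \<Longrightarrow> conjugate (inv h) (conjugate h x) = x"
  by (simp add: conjugate_conjugate l_inv) (simp add: conjugate_def)

lemma conjugate_hom:
  assumes h: "h \<in> carrier G" shows "conjugate h \<in> hom G G"
proof -
  have "inv h \<otimes> (h \<otimes> z) = z" if "z \<in> carrier G" for z
    using h that by (simp add: m_assoc[symmetric])
  then show ?thesis using h unfolding hom_def conjugate_def by (simp add: m_assoc)
qed

lemma conjugate_int_pow:
  "h \<in> carrier G \<Longrightarrow> x \<in> carrier G \<Longrightarrow> conjugate h (x [^] (n::int)) = conjugate h x [^] n"
  by (rule hom_int_pow[OF conjugate_hom _ is_group is_group])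

lemma continuous_map_conjugate: "h \<in> carrier G \<Longrightarrow> continuous_map T T (conjugate h)"
  unfolding conjugate_def
  by (intro continuous_map_mult continuous_map_id[unfolded id_def]) (simp_all add: topspace_eq_carrier)

lemma continuous_map_orbit: "y \<in> carrier G \<Longrightarrow> continuous_map T T (\<lambda>g. conjugate g y)"
  unfolding conjugate_def
  by (intro continuous_map_mult continuous_map_inv continuous_map_id[unfolded id_def])
     (simp add: topspace_eq_carrier)

lemma homeomorphic_map_conjugate:
  assumes "h \<in> carrier G" shows "homeomorphic_map T T (conjugate h)"
proof -
  have "homeomorphic_maps T T (conjugate h) (conjugate (inv h))"
    unfolding homeomorphic_maps_def
    using assms conjugate_inv_conjugate[of h] conjugate_inv_conjugate[of "inv h"]
    by (simp add: continuous_map_conjugate topspace_eq_carrier)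
  then show ?thesis using homeomorphic_maps_map by blast
qed

lemma conj_class_eq_orbit: "conj_class G c = (\<lambda>h. conjugate h c) ` carrier G"
  by (auto simp: conj_class_def conjugate_def)

lemma neighbourhood_inv_mult:
  assumes "openin T V" "\<one> \<in> V"
  obtains W where "openin T W" "\<one> \<in> W" "\<And>a b. a \<in> W \<Longrightarrow> b \<in> W \<Longrightarrow> inv a \<otimes> b \<in> V"
proof -
  let ?S = "{p \<in> topspace (prod_topology T T). inv (fst p) \<otimes> snd p \<in> V}"
  have "continuous_map (prod_topology T T) T (\<lambda>p. inv (fst p) \<otimes> snd p)"
    by (intro continuous_map_mult continuous_map_inv continuous_map_fst continuous_map_snd)
  then have "openin (prod_topology T T) ?S" using openin_continuous_map_preimage assms(1) by blast
  moreover have "(\<one>, \<one>) \<in> ?S" using assms topspace_eq_carrier by simp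
  ultimately have "\<exists>U1 U2. openin T U1 \<and> openin T U2 \<and> \<one> \<in> U1 \<and> \<one> \<in> U2 \<and> U1 \<times> U2 \<subseteq> ?S"
    unfolding openin_prod_topology_alt by blast
  then obtain U1 U2 where U: "openin T U1" "openin T U2" "\<one> \<in> U1" "\<one> \<in> U2" "U1 \<times> U2 \<subseteq> ?S"
    by blast
  show ?thesis
  proof (rule that[of "U1 \<inter> U2"])
    fix a b assume "a \<in> U1 \<inter> U2" "b \<in> U1 \<inter> U2"
    then have "(a, b) \<in> U1 \<times> U2" by blast
    then show "inv a \<otimes> b \<in> V" using U(5) by auto
  qed (use U in auto)
qed

end

section \<open>A comeagre conjugacy class\<close>

locale comeagre_conj_class = Polish_group +
  fixes C :: "'a set"
  assumes conj_class: "\<exists>g \<in> carrier G. C = conj_class G g"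
    and comeagre: "comeagre T C"
begin

lemma C_subset_carrier: "C \<subseteq> carrier G"
  using conj_class by (auto simp: conj_class_eq_orbit)

lemma C_eq_orbit:
  assumes "y \<in> C" shows "C = (\<lambda>h. conjugate h y) ` carrier G"
proof -
  obtain g where g: "g \<in> carrier G" "C = (\<lambda>h. conjugate h g) ` carrier G"
    using conj_class by (auto simp: conj_class_eq_orbit)
  then obtain k where k: "k \<in> carrier G" "y = conjugate k g" using assms by blast
  have "conjugate h y = conjugate (h \<otimes> k) g" if "h \<in> carrier G" for h
    using that k g(1) by (simp add: conjugate_conjugate)
  moreover have "conjugate h g = conjugate (h \<otimes> inv k) y" if "h \<in> carrier G" for h
    using that k g(1) by (simp add: conjugate_conjugate m_assoc)
  ultimately show ?thesis using g k(1) by fastforce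
qed

lemma conjugate_in_C: "y \<in> C \<Longrightarrow> h \<in> carrier G \<Longrightarrow> conjugate h y \<in> C"
  using C_eq_orbit by blast

lemma Baire_space: "Baire_space T"
  using Polish_space completely_metrizable_imp_Baire_space unfolding Polish_space_def by blast

lemma second_countable: "second_countable T"
  using Polish_space by (rule Polish_space_imp_second_countable)

lemma Hausdorff: "Hausdorff_space T"
  using Polish_space completely_metrizable_imp_metrizable_space metrizable_imp_Hausdorff_space
  unfolding Polish_space_def by blast

lemma C_nonmeagre: "\<not> meagre T C"
proof
  assume "meagre T C"
  then have "meagre T (C \<union> (topspace T - C))"
    using comeagre meagre_Un unfolding comeagre_def by blast
  moreover have "C \<union> (topspace T - C) = topspace T" using C_subset_carrier topspace_eq_carrier by blast
  moreover have "topspace T \<noteq> {}" using topspace_eq_carrier by auto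
  ultimately show False using Baire_space_nonmeagre_topspace[OF Baire_space] by simp
qed

text \<open>Countably many translates of \<open>W\<close> cover \<open>G\<close>, so the corresponding conjugates of the
  orbit piece below cover \<open>C\<close>.\<close>

lemma orbit_nonmeagre:
  assumes y: "y \<in> C" and W: "openin T W" "\<one> \<in> W"
  shows "\<not> meagre T ((\<lambda>g. conjugate g y) ` W)"
proof
  let ?I = "(\<lambda>g. conjugate g y) ` W"
  assume M: "meagre T ?I"
  obtain D where D: "countable D" "D \<subseteq> topspace T" "T closure_of D = topspace T"
    using Polish_space unfolding Polish_space_def separable_space_def by auto
  have yc: "y \<in> carrier G" using y C_subset_carrier by blast
  have "C \<subseteq> (\<Union>d\<in>D. conjugate d ` ?I)"
  proof
    fix x assume "x \<in> C"
    then obtain g where g: "g \<in> carrier G" "x = conjugate g y" using C_eq_orbit[OF y] by blast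
    let ?S = "{z \<in> topspace T. inv z \<otimes> g \<in> W}"
    have "continuous_map T T (\<lambda>z. inv z \<otimes> g)"
      by (intro continuous_map_mult continuous_map_inv continuous_map_id[unfolded id_def])
         (simp add: g(1) topspace_eq_carrier)
    then have "openin T ?S" using openin_continuous_map_preimage[OF _ W(1)] by blast
    moreover have "g \<in> ?S" using g W topspace_eq_carrier by simp
    ultimately obtain d where d: "d \<in> D" "d \<in> ?S"
      using D(3) dense_intersects_open[of T D] by blast
    then have dc: "d \<in> carrier G" using topspace_eq_carrier by auto
    have "x = conjugate d (conjugate (inv d \<otimes> g) y)"
      using dc g yc by (simp add: conjugate_conjugate m_assoc[symmetric])
    then show "x \<in> (\<Union>d\<in>D. conjugate d ` ?I)" using d by blast
  qed
  moreover have "meagre T (\<Union>d\<in>D. conjugate d ` ?I)"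
  proof (rule meagre_Union_countable)
    show "countable ((\<lambda>d. conjugate d ` ?I) ` D)" using D(1) by simp
    fix S assume "S \<in> (\<lambda>d. conjugate d ` ?I) ` D"
    then obtain d where "d \<in> D" "S = conjugate d ` ?I" by blast
    moreover have "d \<in> carrier G" using \<open>d \<in> D\<close> D(2) topspace_eq_carrier by blast
    ultimately show "meagre T S" using homeomorphic_map_meagre[OF homeomorphic_map_conjugate M] by blast
  qed
  ultimately show False using C_nonmeagre meagre_subset by blast
qed

lemma Baire_property_orbit:
  assumes "y \<in> carrier G" "openin T W"
  shows "Baire_property T ((\<lambda>g. conjugate g y) ` W)"
proof -
  have "Baire_property T ((\<lambda>g. conjugate g y) ` topspace (subtopology T W))"
    by (rule Baire_property_Polish_image[OF Polish_space_openin[OF Polish_space assms(2)]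
          Hausdorff second_countable continuous_map_from_subtopology[OF continuous_map_orbit[OF assms(1)]]])
  then show ?thesis using openin_subset[OF assms(2)] by (simp add: Int_absorb1)
qed

lemma orbit_locally_comeagre:
  assumes y: "y \<in> C" and V: "openin T V" "\<one> \<in> V"
  obtains U where "openin T U" "y \<in> U" "meagre T (U - (\<lambda>g. conjugate g y) ` V)"
proof -
  have yc: "y \<in> carrier G" using y C_subset_carrier by blast
  obtain W where W: "openin T W" "\<one> \<in> W" "\<And>a b. a \<in> W \<Longrightarrow> b \<in> W \<Longrightarrow> inv a \<otimes> b \<in> V"
    using neighbourhood_inv_mult[OF V] by blast
  have Wc: "W \<subseteq> carrier G" using openin_subset[OF W(1)] topspace_eq_carrier by simp
  let ?I = "(\<lambda>g. conjugate g y) ` W"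
  obtain U0 where U0: "openin T U0" "U0 \<noteq> {}" "meagre T (U0 - ?I)"
    using Baire_property_nonmeagreE[OF Baire_property_orbit[OF yc W(1)] orbit_nonmeagre[OF y W(1,2)]]
    by blast
  have "U0 \<inter> ?I \<noteq> {}"
  proof
    assume "U0 \<inter> ?I = {}"
    then have "meagre T U0" using U0(3) by (simp add: Diff_triv)
    then show False using Baire_space U0(1,2) unfolding Baire_space_def by blast
  qed
  then obtain w0 where w0: "w0 \<in> W" "conjugate w0 y \<in> U0" by blast
  then have w0c: "w0 \<in> carrier G" using Wc by blast
  show ?thesis
  proof (rule that[of "conjugate (inv w0) ` U0"])
    show "openin T (conjugate (inv w0) ` U0)"
      using homeomorphic_map_openness_eq[OF homeomorphic_map_conjugate] U0(1) w0c by blast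
    show "y \<in> conjugate (inv w0) ` U0"
      using w0 w0c yc conjugate_inv_conjugate[of w0 y] by (metis imageI)
    have "conjugate (inv w0) ` U0 - (\<lambda>g. conjugate g y) ` V \<subseteq> conjugate (inv w0) ` (U0 - ?I)"
    proof
      fix z assume z: "z \<in> conjugate (inv w0) ` U0 - (\<lambda>g. conjugate g y) ` V"
      then obtain u where u: "u \<in> U0" "z = conjugate (inv w0) u" by blast
      have "u \<notin> ?I"
      proof
        assume "u \<in> ?I"
        then obtain w where w: "w \<in> W" "u = conjugate w y" by blast
        moreover have "w \<in> carrier G" using w(1) Wc by blast
        ultimately have "z = conjugate (inv w0 \<otimes> w) y" using u w0c yc by (simp add: conjugate_conjugate)
        then show False using z W(3)[OF w0(1) w(1)] by blast
      qed
      then show "z \<in> conjugate (inv w0) ` (U0 - ?I)" using u by blast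
    qed
    moreover have "meagre T (conjugate (inv w0) ` (U0 - ?I))"
      using homeomorphic_map_meagre[OF homeomorphic_map_conjugate U0(3)] w0c by simp
    ultimately show "meagre T (conjugate (inv w0) ` U0 - (\<lambda>g. conjugate g y) ` V)"
      using meagre_subset by blast
  qed
qed

text \<open>Micro-transitivity (Effros): two points of \<open>C\<close> close to each other have overlapping
  comeagre orbit pieces, hence differ by a conjugation from a small neighbourhood of \<open>\<one>\<close>.\<close>

lemma orbit_contains_neighbourhood:
  assumes c: "c \<in> C" and V: "openin T V" "\<one> \<in> V"
  obtains U where "openin T U" "c \<in> U" "U \<inter> C \<subseteq> (\<lambda>g. conjugate g c) ` V"
proof -
  obtain W where W: "openin T W" "\<one> \<in> W" "\<And>a b. a \<in> W \<Longrightarrow> b \<in> W \<Longrightarrow> inv a \<otimes> b \<in> V"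
    using neighbourhood_inv_mult[OF V] by blast
  have Wc: "W \<subseteq> carrier G" using openin_subset[OF W(1)] topspace_eq_carrier by simp
  obtain U where U: "openin T U" "c \<in> U" "meagre T (U - (\<lambda>g. conjugate g c) ` W)"
    using orbit_locally_comeagre[OF c W(1,2)] by blast
  show ?thesis
  proof (rule that[OF U(1,2)], rule subsetI)
    fix y assume y: "y \<in> U \<inter> C"
    obtain Uy where Uy: "openin T Uy" "y \<in> Uy" "meagre T (Uy - (\<lambda>g. conjugate g y) ` W)"
      using orbit_locally_comeagre[of y W] y W(1,2) by blast
    have "U \<inter> Uy \<inter> (\<lambda>g. conjugate g c) ` W \<inter> (\<lambda>g. conjugate g y) ` W \<noteq> {}"
    proof
      assume "U \<inter> Uy \<inter> (\<lambda>g. conjugate g c) ` W \<inter> (\<lambda>g. conjugate g y) ` W = {}"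
      then have "U \<inter> Uy \<subseteq> (U - (\<lambda>g. conjugate g c) ` W) \<union> (Uy - (\<lambda>g. conjugate g y) ` W)"
        by blast
      then have "meagre T (U \<inter> Uy)" using meagre_Un[OF U(3) Uy(3)] meagre_subset by blast
      then have "U \<inter> Uy = {}" using Baire_space U(1) Uy(1) unfolding Baire_space_def by blast
      then show False using y Uy(2) by blast
    qed
    then obtain w1 w2 where w: "w1 \<in> W" "w2 \<in> W" "conjugate w1 c = conjugate w2 y" by blast
    have wc: "w1 \<in> carrier G" "w2 \<in> carrier G" using w(1,2) Wc by blast+
    have yc: "y \<in> carrier G" and cc: "c \<in> carrier G" using y c C_subset_carrier by blast+
    have "y = conjugate (inv w2) (conjugate w1 c)"
      using w(3) conjugate_inv_conjugate[OF wc(2) yc] by simp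
    also have "\<dots> = conjugate (inv w2 \<otimes> w1) c"
      using wc cc by (simp add: conjugate_conjugate)
    finally show "y \<in> (\<lambda>g. conjugate g c) ` V" using W(3)[OF w(2) w(1)] by blast
  qed
qed

lemma equivariant_image_eq:
  assumes equiv: "\<And>h x. h \<in> carrier G \<Longrightarrow> x \<in> C \<Longrightarrow> p (conjugate h x) = conjugate h (p x)"
    and c: "c \<in> C" "p c \<in> C"
  shows "p ` C = C"
proof
  show "p ` C \<subseteq> C"
    using C_eq_orbit[OF c(1)] equiv c conjugate_in_C by auto
  show "C \<subseteq> p ` C"
  proof
    fix x assume "x \<in> C"
    then obtain h where h: "h \<in> carrier G" "x = conjugate h (p c)" using C_eq_orbit[OF c(2)] by blast
    then have "x = p (conjugate h c)" using equiv c(1) by simp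
    then show "x \<in> p ` C" using conjugate_in_C[OF c(1) h(1)] by blast
  qed
qed

lemma equivariant_open_map:
  assumes equiv: "\<And>h x. h \<in> carrier G \<Longrightarrow> x \<in> C \<Longrightarrow> p (conjugate h x) = conjugate h (p x)"
    and into: "p ` C \<subseteq> C"
  shows "open_map (subtopology T C) (subtopology T C) p"
  unfolding open_map_def
proof (intro allI impI)
  fix A assume "openin (subtopology T C) A"
  then obtain U where U: "openin T U" "A = U \<inter> C" unfolding openin_subtopology by blast
  show "openin (subtopology T C) (p ` A)"
  proof (subst openin_subopen, intro ballI)
    fix y assume "y \<in> p ` A"
    then obtain x where x: "x \<in> U" "x \<in> C" "y = p x" using U(2) by blast
    have xc: "x \<in> carrier G" using x C_subset_carrier by blast
    let ?V = "{g \<in> topspace T. conjugate g x \<in> U}"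
    have "openin T ?V" by (rule openin_continuous_map_preimage[OF continuous_map_orbit[OF xc] U(1)])
    moreover have "\<one> \<in> ?V" using x xc topspace_eq_carrier by (simp add: conjugate_def)
    ultimately obtain N where N: "openin T N" "p x \<in> N" "N \<inter> C \<subseteq> (\<lambda>g. conjugate g (p x)) ` ?V"
      using orbit_contains_neighbourhood[of "p x"] x(2) into by blast
    have "N \<inter> C \<subseteq> p ` A"
    proof
      fix z assume "z \<in> N \<inter> C"
      then obtain g where g: "g \<in> ?V" "z = conjugate g (p x)" using N(3) by blast
      then have gc: "g \<in> carrier G" using topspace_eq_carrier by blast
      have "z = p (conjugate g x)" using g(2) equiv[OF gc x(2)] by simp
      moreover have "conjugate g x \<in> A" using g(1) U(2) conjugate_in_C[OF x(2) gc] by blast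
      ultimately show "z \<in> p ` A" by blast
    qed
    then show "\<exists>W. openin (subtopology T C) W \<and> y \<in> W \<and> W \<subseteq> p ` A"
      using N(1,2) x into openin_subtopology_Int[OF N(1)] by blast
  qed
qed

end

theorem mainTheorem11:
  fixes G :: "('a, 'b) monoid_scheme" and T :: "'a topology" and C :: "'a set"
  assumes "polish_group G T"
    and "\<exists>g \<in> carrier G. C = conj_class G g"
    and "comeagre T C"
    and "\<exists>c \<in> C. \<forall>k::int. k \<noteq> 0 \<longrightarrow> c [^]\<^bsub>G\<^esub> k \<in> conj_class G c"
    and "n \<noteq> (0::int)"
  shows "(\<lambda>g. g [^]\<^bsub>G\<^esub> n) ` C = C
    \<and> continuous_map (subtopology T C) (subtopology T C) (\<lambda>g. g [^]\<^bsub>G\<^esub> n)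
    \<and> open_map (subtopology T C) (subtopology T C) (\<lambda>g. g [^]\<^bsub>G\<^esub> n)
    \<and> (\<forall>h \<in> carrier G. \<forall>g \<in> C.
         (h \<otimes>\<^bsub>G\<^esub> g \<otimes>\<^bsub>G\<^esub> inv\<^bsub>G\<^esub> h) [^]\<^bsub>G\<^esub> n
           = h \<otimes>\<^bsub>G\<^esub> (g [^]\<^bsub>G\<^esub> n) \<otimes>\<^bsub>G\<^esub> inv\<^bsub>G\<^esub> h)
    \<and> categorical (subtopology T C) (subtopology T C) (\<lambda>g. g [^]\<^bsub>G\<^esub> n)"
proof -
  interpret comeagre_conj_class G T C
    using assms(1-3) by unfold_locales
  let ?p = "\<lambda>g. g [^]\<^bsub>G\<^esub> n"
  have equiv: "?p (conjugate h g) = conjugate h (?p g)" if "h \<in> carrier G" "g \<in> C" for h g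
    using that C_subset_carrier conjugate_int_pow by auto
  obtain c where c: "c \<in> C" "\<forall>k::int. k \<noteq> 0 \<longrightarrow> c [^]\<^bsub>G\<^esub> k \<in> conj_class G c"
    using assms(4) by blast
  then have "?p c \<in> C" using assms(5) C_eq_orbit[OF c(1)] by (simp add: conj_class_eq_orbit)
  with equiv c(1) have image: "?p ` C = C" by (rule equivariant_image_eq)
  have topspace_C: "topspace (subtopology T C) = C"
    using C_subset_carrier topspace_eq_carrier by auto
  have continuous: "continuous_map (subtopology T C) (subtopology T C) ?p"
    using image topspace_C continuous_map_from_subtopology[OF continuous_map_int_pow]
    by (auto simp: continuous_map_in_subtopology)
  have open_map: "open_map (subtopology T C) (subtopology T C) ?p"
    using equiv image by (intro equivariant_open_map) auto
  have "categorical (subtopology T C) (subtopology T C) ?p"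
    using categorical_continuous_open_surjective[OF Baire_space_comeagre_subtopology[OF Baire_space comeagre]
        Baire_property_analytic continuous open_map]
      Hausdorff_space_subtopology[OF Hausdorff] second_countable_subtopology[OF second_countable]
      image topspace_C by auto
  then show ?thesis
    using image continuous open_map equiv unfolding conjugate_def by blast
qed

end
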